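(* Let $D$ be a strongly connected digraph, $T$ a DFS tree of $D$ rooted at $r$, and $H$ a connected subdigraph of $T$. Let $G_H$ be the undirected graph with vertex set $V(H)$ in which $uv$ is an edge whenever $D$ has a backward arc (with respect to $T$) from $u$ to $v$ or from $v$ to $u$. Then $\chi_A(D\langle V(H)\rangle)\le \chi(G_H)$.
   Context: Digraphs are finite and loopless; paths and cycles are directed. $D\langle U\rangle$ denotes the subdigraph of $D$ induced by $U\subseteq V(D)$. $\chi$ is the usual chromatic number of an undirected graph. A set of vertices is acyclic if it induces no directed cycle; $\chi_A$ is the minimum number of colors in a coloring whose color classes are all acyclic. A DFS tree $T$ of a strongly connected digraph $D$ rooted at $r$ is the spanning out-branching of $D$ produced by a depth-first search of $D$ started at $r$. A vertex $v$ is a descendant of $u$ (and $u$ an ancestor of $v$) if $T$ contains a directed $uv$-path. An arc $(u,v)$ of $D$ is a backward arc if $u$ is a descendant of $v$. *)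

theory Defs
  imports Main
begin

definition digraph :: "'a set \<Rightarrow> ('a \<times> 'a) set \<Rightarrow> bool" where
  "digraph V A \<longleftrightarrow> finite V \<and> A \<subseteq> V \<times> V \<and> (\<forall>v. (v, v) \<notin> A)"

definition strongly_connected :: "'a set \<Rightarrow> ('a \<times> 'a) set \<Rightarrow> bool" where
  "strongly_connected V A \<longleftrightarrow> V \<noteq> {} \<and> (\<forall>u\<in>V. \<forall>v\<in>V. (u, v) \<in> A\<^sup>*)"

text \<open>Depth-first search, with arbitrary (nondeterministic) choice of the next
  unvisited out-neighbour.  dfs_visit A u W T W' T' means: the recursive call
  visiting u, started with visited set W and tree-arc set T, may terminate with
  visited set W' and tree-arc set T'.\<close>

inductive dfs_visit :: "('a \<times> 'a) set \<Rightarrow> 'a \<Rightarrow> 'a set \<Rightarrow> ('a \<times> 'a) set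
    \<Rightarrow> 'a set \<Rightarrow> ('a \<times> 'a) set \<Rightarrow> bool" for A where
  finish: "(\<forall>v. (u, v) \<in> A \<longrightarrow> v \<in> W) \<Longrightarrow> dfs_visit A u W T W T"
| descend: "\<lbrakk> (u, v) \<in> A; v \<notin> W;
             dfs_visit A v (insert v W) (insert (u, v) T) W1 T1;
             dfs_visit A u W1 T1 W2 T2 \<rbrakk>
           \<Longrightarrow> dfs_visit A u W T W2 T2"

definition dfs_tree :: "'a set \<Rightarrow> ('a \<times> 'a) set \<Rightarrow> 'a \<Rightarrow> ('a \<times> 'a) set \<Rightarrow> bool" where
  "dfs_tree V A r T \<longleftrightarrow> r \<in> V \<and> (\<exists>W. dfs_visit A r {r} {} W T)"

definition descendant :: "('a \<times> 'a) set \<Rightarrow> 'a \<Rightarrow> 'a \<Rightarrow> bool" where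
  "descendant T v u \<longleftrightarrow> (u, v) \<in> T\<^sup>*"

definition backward_arc :: "('a \<times> 'a) set \<Rightarrow> ('a \<times> 'a) set \<Rightarrow> 'a \<Rightarrow> 'a \<Rightarrow> bool" where
  "backward_arc A T u v \<longleftrightarrow> (u, v) \<in> A \<and> descendant T u v"

definition connected_subdigraph ::
  "'a set \<Rightarrow> ('a \<times> 'a) set \<Rightarrow> 'a set \<Rightarrow> ('a \<times> 'a) set \<Rightarrow> bool" where
  "connected_subdigraph V T VH AH \<longleftrightarrow>
     VH \<subseteq> V \<and> AH \<subseteq> T \<and> AH \<subseteq> VH \<times> VH \<and> VH \<noteq> {} \<and>
     (\<forall>u\<in>VH. \<forall>v\<in>VH. (u, v) \<in> (AH \<union> AH\<inverse>)\<^sup>*)"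

definition proper_coloring :: "'a set \<Rightarrow> ('a \<Rightarrow> 'a \<Rightarrow> bool) \<Rightarrow> nat \<Rightarrow> ('a \<Rightarrow> nat) \<Rightarrow> bool" where
  "proper_coloring S E k c \<longleftrightarrow> (\<forall>v\<in>S. c v < k) \<and>
     (\<forall>u\<in>S. \<forall>v\<in>S. E u v \<longrightarrow> c u \<noteq> c v)"

definition chromatic_number :: "'a set \<Rightarrow> ('a \<Rightarrow> 'a \<Rightarrow> bool) \<Rightarrow> nat" where
  "chromatic_number S E = (LEAST k. \<exists>c. proper_coloring S E k c)"

text \<open>Induced subdigraph D<U> has arcs A \<inter> U \<times> U. A vertex set U is acyclic
  in D if D<U> has no directed cycle.\<close>

definition acyclic_set :: "('a \<times> 'a) set \<Rightarrow> 'a set \<Rightarrow> bool" where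
  "acyclic_set A U \<longleftrightarrow> acyclic (A \<inter> U \<times> U)"

definition acyclic_coloring :: "'a set \<Rightarrow> ('a \<times> 'a) set \<Rightarrow> nat \<Rightarrow> ('a \<Rightarrow> nat) \<Rightarrow> bool" where
  "acyclic_coloring U A k c \<longleftrightarrow> (\<forall>v\<in>U. c v < k) \<and>
     (\<forall>i<k. acyclic_set A {v\<in>U. c v = i})"

definition dichromatic_number :: "'a set \<Rightarrow> ('a \<times> 'a) set \<Rightarrow> nat" where
  "dichromatic_number U A = (LEAST k. \<exists>c. acyclic_coloring U (A \<inter> U \<times> U) k c)"

end

theory Submission
  imports Defs
begin

text \<open>List the vertices in the order in which depth-first search finishes them.  An arc
  (x, y) that is not backward, i.e. y is not a tree ancestor of x, always ends at a
  vertex finished before x.  Hence inside a colour class of a proper colouring of the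
  backward-arc graph every arc goes back in the finishing order, so no class contains a
  directed cycle, and a proper colouring of that graph is an acyclic colouring.\<close>

definition precedes :: "'a list \<Rightarrow> 'a \<Rightarrow> 'a \<Rightarrow> bool" where
  "precedes L y x \<longleftrightarrow> (\<exists>i j. i < j \<and> j < length L \<and> L ! i = y \<and> L ! j = x)"

lemma precedes_append1: "precedes L y x \<Longrightarrow> precedes (L @ M) y x"
  unfolding precedes_def
proof (elim exE conjE)
  fix i j assume "i < j" "j < length L" "L ! i = y" "L ! j = x"
  then show "\<exists>i j. i < j \<and> j < length (L @ M) \<and> (L @ M) ! i = y \<and> (L @ M) ! j = x"
    by (intro exI[of _ i] exI[of _ j]) (auto simp: nth_append)
qed

lemma precedes_append2: "precedes M y x \<Longrightarrow> precedes (L @ M) y x"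
  unfolding precedes_def
proof (elim exE conjE)
  fix i j assume "i < j" "j < length M" "M ! i = y" "M ! j = x"
  then show "\<exists>i j. i < j \<and> j < length (L @ M) \<and> (L @ M) ! i = y \<and> (L @ M) ! j = x"
    by (intro exI[of _ "length L + i"] exI[of _ "length L + j"]) (auto simp: nth_append)
qed

lemma precedes_append_across:
  assumes "y \<in> set L" and "x \<in> set M"
  shows "precedes (L @ M) y x"
proof -
  obtain i j where "i < length L" "L ! i = y" "j < length M" "M ! j = x"
    using assms by (auto simp: in_set_conv_nth)
  then show ?thesis
    unfolding precedes_def
    by (intro exI[of _ i] exI[of _ "length L + j"]) (auto simp: nth_append)
qed

lemma precedes_trans:
  assumes "distinct L" and "precedes L x y" and "precedes L y z"
  shows "precedes L x z"
proof -
  obtain i j where ij: "i < j" "j < length L" "L ! i = x" "L ! j = y"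
    using assms(2) unfolding precedes_def by blast
  obtain j' k where jk: "j' < k" "k < length L" "L ! j' = y" "L ! k = z"
    using assms(3) unfolding precedes_def by blast
  have "j = j'"
    using ij jk nth_eq_iff_index_eq[OF assms(1), of j j'] by auto
  then show ?thesis
    unfolding precedes_def using ij jk by (intro exI[of _ i] exI[of _ k]) simp
qed

lemma precedes_irrefl: "distinct L \<Longrightarrow> \<not> precedes L x x"
  unfolding precedes_def using nth_eq_iff_index_eq by fastforce

lemma acyclic_if_precedes:
  assumes "distinct L" and "\<And>x y. (x, y) \<in> R \<Longrightarrow> precedes L y x"
  shows "acyclic R"
proof -
  let ?Q = "{(x, y). precedes L y x}"
  have "trans ?Q"
    using precedes_trans[OF assms(1)] by (auto intro: transI)
  then have "acyclic ?Q"
    unfolding acyclic_def using precedes_irrefl[OF assms(1)] by simp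
  then show ?thesis
    by (rule acyclic_subset) (use assms(2) in auto)
qed

text \<open>postorder A T W L: L is a depth-first finishing order of its vertices, W being
  the vertices visited before them; an arc leaving x ends in W, at a vertex finished
  before x, or at a tree ancestor of x.\<close>

definition postorder :: "('a \<times> 'a) set \<Rightarrow> ('a \<times> 'a) set \<Rightarrow> 'a set \<Rightarrow> 'a list \<Rightarrow> bool" where
  "postorder A T W L \<longleftrightarrow> distinct L \<and>
     (\<forall>x\<in>set L. \<forall>y. (x, y) \<in> A \<longrightarrow> y \<in> W \<or> precedes L y x \<or> (y, x) \<in> T\<^sup>*)"

lemma postorder_mono_tree: "T \<subseteq> T' \<Longrightarrow> postorder A T W L \<Longrightarrow> postorder A T' W L"
  unfolding postorder_def using rtrancl_mono by blast

lemma postorder_singleton_iff: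
  "postorder A T W [v] \<longleftrightarrow> (\<forall>y. (v, y) \<in> A \<longrightarrow> y \<in> W \<or> (y, v) \<in> T\<^sup>*)"
  unfolding postorder_def precedes_def by auto

lemma postorder_append:
  assumes "postorder A T W L" and "postorder A T (W \<union> set L) M"
    and "set L \<inter> set M = {}"
  shows "postorder A T W (L @ M)"
  using assms precedes_append1 precedes_append2 precedes_append_across
  unfolding postorder_def by (metis Un_iff distinct_append set_append)

lemma postorder_drop_ancestor:
  assumes "postorder A T (insert v W) L" and "\<forall>x\<in>set L. (v, x) \<in> T\<^sup>*"
  shows "postorder A T W L"
  using assms unfolding postorder_def by blast

lemma dfs_visit_mono: "dfs_visit A u W T W' T' \<Longrightarrow> W \<subseteq> W' \<and> T \<subseteq> T'"
  by (induction rule: dfs_visit.induct) (simp, blast)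

lemma dfs_visit_closed:
  "dfs_visit A u W T W' T' \<Longrightarrow> x \<in> insert u (W' - W) \<Longrightarrow> (x, y) \<in> A \<Longrightarrow> y \<in> W'"
proof (induction arbitrary: x rule: dfs_visit.induct)
  case (finish u W T)
  then show ?case by auto
next
  case (descend u v W T W1 T1 W2 T2)
  have "W1 \<subseteq> W2"
    using dfs_visit_mono[OF descend.hyps(4)] by blast
  then show ?case
    using descend.prems descend.IH by blast
qed

lemma dfs_visit_postorder:
  "dfs_visit A u W T W' T' \<Longrightarrow>
     \<exists>L. set L = W' - W \<and> (\<forall>x\<in>set L. (u, x) \<in> T'\<^sup>*) \<and> postorder A T' W L"
proof (induction rule: dfs_visit.induct)
  case (finish u W T)
  show ?case
    by (intro exI[of _ "[]"]) (simp add: postorder_def)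
next
  case (descend u v W T W1 T1 W2 T2)
  obtain L1 where L1: "set L1 = W1 - insert v W" "\<forall>x\<in>set L1. (v, x) \<in> T1\<^sup>*"
    "postorder A T1 (insert v W) L1"
    using descend.IH(1) by blast
  obtain L2 where L2: "set L2 = W2 - W1" "\<forall>x\<in>set L2. (u, x) \<in> T2\<^sup>*" "postorder A T2 W1 L2"
    using descend.IH(2) by blast
  have mono1: "insert v W \<subseteq> W1" "insert (u, v) T \<subseteq> T1"
    using dfs_visit_mono[OF descend.hyps(3)] by auto
  have mono2: "W1 \<subseteq> W2" "T1 \<subseteq> T2"
    using dfs_visit_mono[OF descend.hyps(4)] by auto
  have T1_T2: "T1\<^sup>* \<subseteq> T2\<^sup>*"
    using mono2(2) by (rule rtrancl_mono)
  have "postorder A T2 W L1"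
    using postorder_mono_tree[OF mono2(2) postorder_drop_ancestor[OF L1(3,2)]] .
  moreover have "postorder A T2 (W \<union> set L1) [v]"
    unfolding postorder_singleton_iff
    using dfs_visit_closed[OF descend.hyps(3), of v] L1(1) by blast
  moreover have "set L1 \<inter> set [v] = {}"
    using L1(1) by auto
  ultimately have "postorder A T2 W (L1 @ [v])"
    by (rule postorder_append)
  moreover have "W \<union> set (L1 @ [v]) = W1"
    using L1(1) mono1(1) by auto
  moreover have "set (L1 @ [v]) \<inter> set L2 = {}"
    using L1(1) L2(1) mono1(1) by auto
  ultimately have "postorder A T2 W ((L1 @ [v]) @ L2)"
    using L2(3) postorder_append by metis
  moreover have "set ((L1 @ [v]) @ L2) = W2 - W"
    using L1(1) L2(1) mono1(1) mono2(1) descend.hyps(2) by auto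
  moreover have "\<forall>x\<in>set ((L1 @ [v]) @ L2). (u, x) \<in> T2\<^sup>*"
  proof -
    have "(u, v) \<in> T2"
      using mono1(2) mono2(2) by auto
    then show ?thesis
      using L1(2) L2(2) T1_T2 by (auto intro: converse_rtrancl_into_rtrancl)
  qed
  ultimately show ?case by blast
qed

lemma dfs_tree_postorder:
  assumes "strongly_connected V A" and "dfs_tree V A r T"
  shows "\<exists>L. postorder A T {} L \<and> V \<subseteq> set L"
proof -
  obtain W where "r \<in> V" and dfs: "dfs_visit A r {r} {} W T"
    using assms(2) unfolding dfs_tree_def by blast
  obtain L where L: "set L = W - {r}" "\<forall>x\<in>set L. (r, x) \<in> T\<^sup>*" "postorder A T {r} L"
    using dfs_visit_postorder[OF dfs] by blast
  have "r \<in> W"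
    using dfs_visit_mono[OF dfs] by blast
  have closed: "y \<in> W" if "x \<in> W" "(x, y) \<in> A" for x y
    using dfs_visit_closed[OF dfs, of x y] that by blast
  have "postorder A T {} L"
    using postorder_drop_ancestor[OF L(3,2)] .
  moreover have "postorder A T ({} \<union> set L) [r]"
    unfolding postorder_singleton_iff
    using closed[OF \<open>r \<in> W\<close>] L(1) by blast
  moreover have "set L \<inter> set [r] = {}"
    using L(1) by auto
  ultimately have "postorder A T {} (L @ [r])"
    by (rule postorder_append)
  moreover have "V \<subseteq> W"
  proof
    fix v assume "v \<in> V"
    then have "(r, v) \<in> A\<^sup>*"
      using assms(1) \<open>r \<in> V\<close> unfolding strongly_connected_def by blast
    then show "v \<in> W"
      by induction (use \<open>r \<in> W\<close> closed in blast)+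
  qed
  moreover have "set (L @ [r]) = W"
    using L(1) \<open>r \<in> W\<close> by auto
  ultimately show ?thesis by blast
qed

lemma acyclic_set_without_backward_arcs:
  assumes "postorder A T {} L" and "U \<subseteq> set L"
    and "\<forall>x\<in>U. \<forall>y\<in>U. \<not> backward_arc A T x y"
  shows "acyclic_set A U"
  unfolding acyclic_set_def
proof (rule acyclic_if_precedes)
  show "distinct L"
    using assms(1) unfolding postorder_def by blast
  fix x y assume "(x, y) \<in> A \<inter> U \<times> U"
  then show "precedes L y x"
    using assms unfolding postorder_def backward_arc_def descendant_def by blast
qed

lemma chromatic_number_attained:
  assumes "finite S" and "\<forall>v\<in>S. \<not> E v v"
  shows "\<exists>c. proper_coloring S E (chromatic_number S E) c"
proof -
  obtain h where h: "bij_betw h S {0..<card S}"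
    using ex_bij_betw_finite_nat[OF assms(1)] by blast
  have "proper_coloring S E (card S) h"
    using h assms(2) unfolding proper_coloring_def bij_betw_def inj_on_def by auto
  then have "\<exists>k c. proper_coloring S E k c" by blast
  then show ?thesis
    unfolding chromatic_number_def by (rule LeastI_ex)
qed

theorem mainTheorem5:
  fixes V :: "'a set" and A T AH :: "('a \<times> 'a) set" and r :: 'a and VH :: "'a set"
  assumes "digraph V A"
    and "strongly_connected V A"
    and "dfs_tree V A r T"
    and "connected_subdigraph V T VH AH"
  shows "dichromatic_number VH A \<le>
         chromatic_number VH (\<lambda>u v. backward_arc A T u v \<or> backward_arc A T v u)"
proof -
  define E where "E = (\<lambda>u v. backward_arc A T u v \<or> backward_arc A T v u)"
  have VH: "VH \<subseteq> V" "finite VH"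
    using assms(1,4) unfolding digraph_def connected_subdigraph_def by (auto intro: finite_subset)
  obtain L where L: "postorder A T {} L" "V \<subseteq> set L"
    using dfs_tree_postorder[OF assms(2,3)] by blast
  have "\<forall>v\<in>VH. \<not> E v v"
    using assms(1) unfolding E_def backward_arc_def digraph_def by blast
  then obtain c where c: "proper_coloring VH E (chromatic_number VH E) c"
    using chromatic_number_attained[OF VH(2)] by blast
  have "acyclic_coloring VH (A \<inter> VH \<times> VH) (chromatic_number VH E) c"
    unfolding acyclic_coloring_def
  proof (intro conjI allI impI ballI)
    fix i
    let ?C = "{v \<in> VH. c v = i}"
    have "acyclic_set A ?C"
      using c L VH(1) unfolding proper_coloring_def E_def
      by (intro acyclic_set_without_backward_arcs[of _ _ L]) auto
    moreover have "A \<inter> VH \<times> VH \<inter> ?C \<times> ?C = A \<inter> ?C \<times> ?C" by blast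
    ultimately show "acyclic_set (A \<inter> VH \<times> VH) ?C"
      unfolding acyclic_set_def by simp
  qed (use c in \<open>auto simp: proper_coloring_def\<close>)
  then show ?thesis
    unfolding dichromatic_number_def E_def by (intro Least_le exI)
qed

end
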